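(* Let $n\geq1$, $\sigma_0>0$ and $0<\gamma<1$. Suppose that for each $0<\sigma\leq\sigma_0$ and each $0<\alpha<1$ a symmetric Markov kernel $K^\sigma_\alpha$ on $\mathbb{R}^n$ is given with $K^\sigma_\alpha\in\mathcal{S}(\sigma,\alpha)$ and $K^\sigma_\alpha\in\mathcal{H}\bigl(\gamma,\bigl(\tfrac{1+\gamma}{1-\gamma}\bigr)^{n+\sigma}\bigr)$. Then the operator \[\mathcal{K}^{**}f(x)=\sup_{0<\alpha<1,\ 0<\sigma\leq\sigma_0}\left|\int_{\mathbb{R}^n}K^\sigma_\alpha(x,z)f(z)\,dz\right|\] is of weak type $(1,1)$ and bounded on $L^p(\mathbb{R}^n)$ for $1<p\leq\infty$.
   Context: A symmetric Markov kernel on $\mathbb{R}^n$ is a nonnegative measurable function $K$ on $\mathbb{R}^n\times\mathbb{R}^n$ with $K(x,z)=K(z,x)$ and $\int_{\mathbb{R}^n}K(x,z)\,dz=1$ for every $x$. For $0<\gamma<1$ and $H\geq1$, $K\in\mathcal{H}(\gamma,H)$ means that for every $x\in\mathbb{R}^n$ and every $\xi\neq x$, $\sup_{z\in B(\xi,\gamma|x-\xi|)}K(x,z)\leq H\inf_{z\in B(\xi,\gamma|x-\xi|)}K(x,z)$. $K\in\mathcal{S}(\sigma,\alpha)$ means $\lim_{|x-z|\to\infty}|x-z|^{n+\sigma}K(x,z)=\alpha$. *)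

theory Defs
  imports "HOL-Analysis.Analysis"
begin

text \<open>Symmetric Markov kernel on R^n (R^n rendered as a Euclidean space 'a, n = DIM('a)).\<close>
definition sym_markov_kernel :: "('a::euclidean_space \<Rightarrow> 'a \<Rightarrow> real) \<Rightarrow> bool" where
  "sym_markov_kernel K \<longleftrightarrow>
     (\<lambda>(x, z). K x z) \<in> borel_measurable borel \<and>
     (\<forall>x z. 0 \<le> K x z) \<and>
     (\<forall>x z. K x z = K z x) \<and>
     (\<forall>x. (\<integral>\<^sup>+ z. ennreal (K x z) \<partial>lborel) = 1)"

text \<open>Class H(gamma, H): sup over the ball is at most H times the inf over the ball
  (written out pairwise).\<close>
definition kernel_H :: "real \<Rightarrow> real \<Rightarrow> ('a::euclidean_space \<Rightarrow> 'a \<Rightarrow> real) \<Rightarrow> bool" where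
  "kernel_H \<gamma> H K \<longleftrightarrow>
     (\<forall>x \<xi>. \<xi> \<noteq> x \<longrightarrow>
        (\<forall>z1 \<in> ball \<xi> (\<gamma> * dist x \<xi>). \<forall>z2 \<in> ball \<xi> (\<gamma> * dist x \<xi>). K x z1 \<le> H * K x z2))"

definition kernel_S :: "real \<Rightarrow> real \<Rightarrow> ('a::euclidean_space \<Rightarrow> 'a \<Rightarrow> real) \<Rightarrow> bool" where
  "kernel_S \<sigma> \<alpha> K \<longleftrightarrow>
     (\<forall>\<epsilon>>0. \<exists>R. \<forall>x z. R < dist x z \<longrightarrow>
        \<bar>dist x z powr (real DIM('a) + \<sigma>) * K x z - \<alpha>\<bar> < \<epsilon>)"

definition max_op :: "real \<Rightarrow> (real \<Rightarrow> real \<Rightarrow> 'a::euclidean_space \<Rightarrow> 'a \<Rightarrow> real)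
    \<Rightarrow> ('a \<Rightarrow> real) \<Rightarrow> 'a \<Rightarrow> ennreal" where
  "max_op \<sigma>0 K f x =
     (SUP (\<alpha>, \<sigma>) \<in> {0<..<1} \<times> {0<..\<sigma>0}. ennreal \<bar>\<integral> z. K \<sigma> \<alpha> x z * f z \<partial>lborel\<bar>)"

text \<open>Outer Lebesgue measure (the level sets of the maximal operator need not be known
  to be measurable a priori).\<close>
definition outer_leb :: "'a::euclidean_space set \<Rightarrow> ennreal" where
  "outer_leb S = (INF A \<in> {A \<in> sets lborel. S \<subseteq> A}. emeasure lborel A)"

definition upper_nn_integral :: "('a::euclidean_space \<Rightarrow> ennreal) \<Rightarrow> ennreal" where
  "upper_nn_integral g =
     (INF h \<in> {h \<in> borel_measurable lborel. \<forall>x. g x \<le> h x}. \<integral>\<^sup>+ x. h x \<partial>lborel)"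

definition weak_type_11 :: "(('a::euclidean_space \<Rightarrow> real) \<Rightarrow> 'a \<Rightarrow> ennreal) \<Rightarrow> bool" where
  "weak_type_11 T \<longleftrightarrow> (\<exists>C::real. 0 \<le> C \<and>
     (\<forall>f. integrable lborel f \<longrightarrow> (\<forall>t::real. 0 < t \<longrightarrow>
        ennreal t * outer_leb {x. ennreal t < T f x}
          \<le> ennreal C * (\<integral>\<^sup>+ z. ennreal \<bar>f z\<bar> \<partial>lborel))))"

definition bounded_Lp :: "real \<Rightarrow> (('a::euclidean_space \<Rightarrow> real) \<Rightarrow> 'a \<Rightarrow> ennreal) \<Rightarrow> bool" where
  "bounded_Lp p T \<longleftrightarrow> (\<exists>C::real. 0 \<le> C \<and>
     (\<forall>f. f \<in> borel_measurable lborel \<longrightarrow>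
          (\<integral>\<^sup>+ z. ennreal (\<bar>f z\<bar> powr p) \<partial>lborel) < \<infinity> \<longrightarrow>
          upper_nn_integral (\<lambda>x. if T f x = \<infinity> then \<infinity> else ennreal (enn2real (T f x) powr p))
            \<le> ennreal (C powr p) * (\<integral>\<^sup>+ z. ennreal (\<bar>f z\<bar> powr p) \<partial>lborel)))"

definition bounded_Linf :: "(('a::euclidean_space \<Rightarrow> real) \<Rightarrow> 'a \<Rightarrow> ennreal) \<Rightarrow> bool" where
  "bounded_Linf T \<longleftrightarrow> (\<exists>C::real. 0 \<le> C \<and>
     (\<forall>f M. f \<in> borel_measurable lborel \<longrightarrow> (AE z in lborel. \<bar>f z\<bar> \<le> M) \<longrightarrow>
          (AE x in lborel. T f x \<le> ennreal (C * M))))"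

end

theory Submission
  imports Defs
begin

text \<open>A kernel in \<open>\<H>(\<gamma>, H)\<close> is, up to the factor \<open>H\<close>, dominated at every \<open>z \<noteq> x\<close> by its own
  average over the ball of radius \<open>\<gamma> |z - x|\<close> around \<open>z\<close>. Inserting this average into
  \<open>\<integral> K(x,z) f(z) dz\<close> and exchanging the order of integration bounds the integral by a constant
  multiple of the Hardy--Littlewood maximal function \<open>M f(x)\<close>, where the constant depends only on
  \<open>n\<close>, \<open>\<gamma>\<close> and \<open>H\<close>; since the Harnack constants \<open>((1 + \<gamma>) / (1 - \<gamma>)) ^ (n + \<sigma>)\<close> are bounded for
  \<open>\<sigma> \<le> \<sigma>\<^sub>0\<close>, this gives \<open>\<K>\<^sup>*\<^sup>* f \<le> C M f\<close> pointwise. The maximal function is of weak type (1,1)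
  by the Vitali covering lemma and bounded on \<open>L\<^sup>p\<close> by the layer cake formula applied to the
  truncations \<open>f \<one>{|f| > t/2}\<close> (Marcinkiewicz); the \<open>L\<^sup>\<infinity>\<close> bound holds because the kernels are
  Markov.\<close>

section \<open>The Hardy--Littlewood maximal function\<close>

text \<open>Only rational radii enter the supremum, so that it is countable and hence measurable.\<close>

definition hl_maximal :: "('a::euclidean_space \<Rightarrow> real) \<Rightarrow> 'a \<Rightarrow> ennreal" where
  "hl_maximal f x = (SUP r \<in> {r. r \<in> \<rat> \<and> 0 < r}.
      (\<integral>\<^sup>+ z. ennreal \<bar>f z\<bar> * indicator (ball x r) z \<partial>lborel) *
        ennreal (1 / (unit_ball_vol (real DIM('a)) * r ^ DIM('a))))"

lemma borel_measurable_lborel_pair: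
  "h \<in> borel_measurable (borel \<Otimes>\<^sub>M borel) \<Longrightarrow> h \<in> borel_measurable (lborel \<Otimes>\<^sub>M lborel)"
  by (simp add: measurable_cong_sets[OF sets_pair_measure_cong[OF sets_lborel sets_lborel] refl])

lemma borel_measurable_hl_maximal:
  fixes f :: "'a::euclidean_space \<Rightarrow> real"
  assumes f: "f \<in> borel_measurable lborel"
  shows "hl_maximal f \<in> borel_measurable lborel"
  unfolding hl_maximal_def
proof (rule borel_measurable_SUP)
  show "countable {r::real. r \<in> \<rat> \<and> 0 < r}"
    by (rule countable_subset[OF _ countable_rat]) auto
next
  fix r :: real
  have f': "f \<in> borel_measurable borel" using f by simp
  have "(\<lambda>(x, z). ennreal \<bar>f z\<bar> * of_bool (dist x z < r))
      \<in> borel_measurable (borel \<Otimes>\<^sub>M (borel::'a measure))"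
    using f' by measurable
  then have "case_prod (\<lambda>x z. ennreal \<bar>f z\<bar> * indicator (ball x r) z)
      \<in> borel_measurable (lborel \<Otimes>\<^sub>M (lborel::'a measure))"
    by (intro borel_measurable_lborel_pair) (simp add: indicator_def mem_ball split_beta')
  then have "(\<lambda>x. \<integral>\<^sup>+ z. ennreal \<bar>f z\<bar> * indicator (ball x r) z \<partial>lborel) \<in> borel_measurable lborel"
    by (rule lborel.borel_measurable_nn_integral)
  then show "(\<lambda>x. (\<integral>\<^sup>+ z. ennreal \<bar>f z\<bar> * indicator (ball x r) z \<partial>lborel) *
        ennreal (1 / (unit_ball_vol (real DIM('a)) * r ^ DIM('a)))) \<in> borel_measurable lborel"
    by measurable
qed

lemma ball_average_le_hl_maximal:
  assumes "r \<in> \<rat>" "0 < r"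
  shows "(\<integral>\<^sup>+ z. ennreal \<bar>f z\<bar> * indicator (ball x r) z \<partial>lborel) *
        ennreal (1 / (unit_ball_vol (real DIM('a)) * r ^ DIM('a))) \<le> hl_maximal f (x::'a::euclidean_space)"
  unfolding hl_maximal_def using assms by (intro SUP_upper) auto

lemma ball_integral_le_hl_maximal:
  fixes x :: "'a::euclidean_space"
  assumes "r \<in> \<rat>" "0 < r"
  shows "(\<integral>\<^sup>+ z. ennreal \<bar>f z\<bar> * indicator (ball x r) z \<partial>lborel)
     \<le> hl_maximal f x * ennreal (unit_ball_vol (real DIM('a)) * r ^ DIM('a))"
proof -
  define V where "V = unit_ball_vol (real DIM('a)) * r ^ DIM('a)"
  have V: "0 < V" unfolding V_def using assms by simp
  have "(\<integral>\<^sup>+ z. ennreal \<bar>f z\<bar> * indicator (ball x r) z \<partial>lborel)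
      = (\<integral>\<^sup>+ z. ennreal \<bar>f z\<bar> * indicator (ball x r) z \<partial>lborel) * ennreal (1 / V) * ennreal V"
    using V by (simp add: mult.assoc ennreal_mult'[symmetric])
  also have "\<dots> \<le> hl_maximal f x * ennreal (unit_ball_vol (real DIM('a)) * r ^ DIM('a))"
    using ball_average_le_hl_maximal[OF assms] unfolding V_def by (intro mult_right_mono) auto
  finally show ?thesis .
qed

lemma le_nn_integral_count_space:
  fixes g :: "'i \<Rightarrow> ennreal"
  assumes "j \<in> I"
  shows "g j \<le> (\<integral>\<^sup>+ i. g i \<partial>count_space I)"
proof -
  have "(\<integral>\<^sup>+ i. g i * indicator {j} i \<partial>count_space I) = (\<Sum>i\<in>{j}. g i * indicator {j} i)"
    using assms by (intro nn_integral_count_space') auto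
  then have "g j = (\<integral>\<^sup>+ i. g i * indicator {j} i \<partial>count_space I)" by simp
  also have "\<dots> \<le> (\<integral>\<^sup>+ i. g i \<partial>count_space I)"
    by (intro nn_integral_mono) (auto simp: indicator_def)
  finally show ?thesis .
qed

lemma emeasure_UN_countable_le:
  assumes I: "countable I" and X: "\<And>i. i \<in> I \<Longrightarrow> X i \<in> sets M"
  shows "emeasure M (\<Union>(X ` I)) \<le> (\<integral>\<^sup>+ i. emeasure M (X i) \<partial>count_space I)"
proof -
  have "emeasure M (\<Union>(X ` I)) = (\<integral>\<^sup>+ x. indicator (\<Union>(X ` I)) x \<partial>M)"
    using I X by (intro nn_integral_indicator[symmetric] sets.countable_UN'') auto
  also have "\<dots> \<le> (\<integral>\<^sup>+ x. (\<integral>\<^sup>+ i. indicator (X i) x \<partial>count_space I) \<partial>M)"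
  proof (intro nn_integral_mono)
    fix x
    show "indicator (\<Union>(X ` I)) x \<le> (\<integral>\<^sup>+ i. indicator (X i) x \<partial>count_space I)"
    proof (cases "x \<in> \<Union>(X ` I)")
      case True
      then obtain j where j: "j \<in> I" "x \<in> X j" by auto
      then have "indicator (\<Union>(X ` I)) x = (indicator (X j) x :: ennreal)" by (auto simp: indicator_def)
      also have "\<dots> \<le> (\<integral>\<^sup>+ i. indicator (X i) x \<partial>count_space I)"
        using j by (intro le_nn_integral_count_space)
      finally show ?thesis .
    qed simp
  qed
  also have "\<dots> = (\<integral>\<^sup>+ i. (\<integral>\<^sup>+ x. indicator (X i) x \<partial>M) \<partial>count_space I)"
    using I X by (intro nn_integral_count_space_nn_integral) auto
  also have "\<dots> = (\<integral>\<^sup>+ i. emeasure M (X i) \<partial>count_space I)"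
    using X by (intro nn_integral_cong) (auto simp: space_count_space)
  finally show ?thesis .
qed

lemma emeasure_five_times_disjoint_balls_le:
  fixes f :: "'a::euclidean_space \<Rightarrow> real" and C :: "('a \<times> real) set"
  assumes f: "f \<in> borel_measurable lborel"
    and C: "countable C" "disjoint_family_on (\<lambda>i. ball (fst i) (snd i)) C"
    and pos: "\<And>i. i \<in> C \<Longrightarrow> 0 < snd i"
    and large: "\<And>i. i \<in> C \<Longrightarrow> ennreal t * emeasure lborel (ball (fst i) (snd i))
      \<le> (\<integral>\<^sup>+ z. ennreal \<bar>f z\<bar> * indicator (ball (fst i) (snd i)) z \<partial>lborel)"
  shows "ennreal t * emeasure lborel (\<Union>i\<in>C. ball (fst i) (5 * snd i))
           \<le> ennreal (5 ^ DIM('a)) * (\<integral>\<^sup>+ z. ennreal \<bar>f z\<bar> \<partial>lborel)"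
proof -
  define N where "N = density lborel (\<lambda>z. ennreal \<bar>f z\<bar>)"
  have N: "emeasure N B = (\<integral>\<^sup>+ z. ennreal \<bar>f z\<bar> * indicator B z \<partial>lborel)" if "B \<in> sets lborel" for B
    unfolding N_def using that f by (simp add: emeasure_density)
  have "emeasure lborel (\<Union>i\<in>C. ball (fst i) (5 * snd i))
      \<le> (\<integral>\<^sup>+ i. emeasure lborel (ball (fst i) (5 * snd i)) \<partial>count_space C)"
    using C(1) by (intro emeasure_UN_countable_le) auto
  also have "\<dots> = (\<integral>\<^sup>+ i. ennreal (5 ^ DIM('a)) * emeasure lborel (ball (fst i) (snd i)) \<partial>count_space C)"
  proof (intro nn_integral_cong)
    fix i assume "i \<in> space (count_space C)"
    then have "0 < snd i" using pos by simp
    then show "emeasure lborel (ball (fst i) (5 * snd i))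
        = ennreal (5 ^ DIM('a)) * emeasure lborel (ball (fst i) (snd i))"
      by (simp add: emeasure_ball ennreal_mult'[symmetric] power_mult_distrib mult_ac)
  qed
  finally have "ennreal t * emeasure lborel (\<Union>i\<in>C. ball (fst i) (5 * snd i))
      \<le> ennreal t * (\<integral>\<^sup>+ i. ennreal (5 ^ DIM('a)) * emeasure lborel (ball (fst i) (snd i)) \<partial>count_space C)"
    by (rule mult_left_mono) simp
  also have "\<dots> = ennreal (5 ^ DIM('a)) * (\<integral>\<^sup>+ i. ennreal t * emeasure lborel (ball (fst i) (snd i)) \<partial>count_space C)"
    by (simp add: nn_integral_cmult[symmetric] mult_ac)
  also have "\<dots> \<le> ennreal (5 ^ DIM('a)) * (\<integral>\<^sup>+ i. emeasure N (ball (fst i) (snd i)) \<partial>count_space C)"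
    using large by (intro mult_left_mono nn_integral_mono) (auto simp: N)
  also have "(\<integral>\<^sup>+ i. emeasure N (ball (fst i) (snd i)) \<partial>count_space C) = emeasure N (\<Union>i\<in>C. ball (fst i) (snd i))"
    using C by (intro emeasure_UN_countable[symmetric]) (auto simp: N_def)
  also have "\<dots> \<le> emeasure N UNIV"
    by (intro emeasure_mono) (auto simp: N_def)
  also have "\<dots> = (\<integral>\<^sup>+ z. ennreal \<bar>f z\<bar> \<partial>lborel)"
    by (simp add: N)
  finally show ?thesis by (simp add: mult_left_mono)
qed

lemma ball_mass_gt_if_hl_maximal_gt:
  fixes x :: "'a::euclidean_space"
  assumes "ennreal t < hl_maximal f x"
  obtains r where "r \<in> \<rat>" "0 < r"
    "ennreal t * emeasure lborel (ball x r) < (\<integral>\<^sup>+ z. ennreal \<bar>f z\<bar> * indicator (ball x r) z \<partial>lborel)"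
proof -
  define V where "V = unit_ball_vol (real DIM('a))"
  have V: "0 < V" unfolding V_def by simp
  define J where "J = (\<lambda>r. \<integral>\<^sup>+ z. ennreal \<bar>f z\<bar> * indicator (ball x r) z \<partial>lborel)"
  obtain r where r: "r \<in> \<rat>" "0 < r" "ennreal t < J r * ennreal (1 / (V * r ^ DIM('a)))"
    using assms unfolding hl_maximal_def J_def V_def by (auto simp: less_SUP_iff)
  have pos: "0 < V * r ^ DIM('a)" using V r by simp
  have "ennreal t * emeasure lborel (ball x r) < J r * ennreal (1 / (V * r ^ DIM('a))) * ennreal (V * r ^ DIM('a))"
    using r pos by (auto simp: emeasure_ball V_def intro!: ennreal_mult_strict_right_mono)
  also have "\<dots> = J r"
    using pos V r(2) by (simp add: mult.assoc ennreal_mult'[symmetric])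
  finally show ?thesis using r that unfolding J_def by blast
qed

lemma radius_le_if_emeasure_ball_less:
  fixes x :: "'a::euclidean_space"
  assumes t: "0 < t" and r: "0 < r" and I: "ennreal t * emeasure lborel (ball x r) < ennreal I"
  shows "r \<le> max 1 (I / (t * unit_ball_vol (real DIM('a))))"
proof -
  define V where "V = unit_ball_vol (real DIM('a))"
  have V: "0 < V" unfolding V_def by simp
  have "ennreal (t * (V * r ^ DIM('a))) < ennreal I"
    using I r t V by (simp add: emeasure_ball V_def ennreal_mult')
  then have "r ^ DIM('a) < I / (t * V)"
    using t V r by (simp add: ennreal_less_iff field_simps)
  moreover have "r \<le> r ^ DIM('a)" if "1 < r"
    using that power_increasing[of 1 "DIM('a)" r] DIM_positive[where 'a='a] by simp
  ultimately show ?thesis unfolding V_def by (cases "1 < r") auto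
qed

lemma hl_maximal_weak_type:
  fixes f :: "'a::euclidean_space \<Rightarrow> real"
  assumes f: "f \<in> borel_measurable lborel" and t: "0 < t"
  shows "ennreal t * emeasure lborel {x. ennreal t < hl_maximal f x}
           \<le> ennreal (5 ^ DIM('a)) * (\<integral>\<^sup>+ z. ennreal \<bar>f z\<bar> \<partial>lborel)"
proof (cases "(\<integral>\<^sup>+ z. ennreal \<bar>f z\<bar> \<partial>lborel) = \<infinity>")
  case True
  then show ?thesis by (simp add: ennreal_mult_top)
next
  case False
  then obtain I where I: "(\<integral>\<^sup>+ z. ennreal \<bar>f z\<bar> \<partial>lborel) = ennreal I"
    by (cases "(\<integral>\<^sup>+ z. ennreal \<bar>f z\<bar> \<partial>lborel)") auto
  define J where "J = (\<lambda>x r. \<integral>\<^sup>+ z. ennreal \<bar>f z\<bar> * indicator (ball x r) z \<partial>lborel)"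
  define Ks where "Ks = {(x, r). r \<in> \<rat> \<and> 0 < r \<and> ennreal t * emeasure lborel (ball x r) < J x r}"
  define S where "S = {x. ennreal t < hl_maximal f x}"
  have cover: "S \<subseteq> (\<Union>i\<in>Ks. ball (fst i) (snd i))"
  proof
    fix x assume "x \<in> S"
    then obtain r where "r \<in> \<rat>" "0 < r" "ennreal t * emeasure lborel (ball x r) < J x r"
      unfolding S_def J_def by (auto elim: ball_mass_gt_if_hl_maximal_gt)
    then show "x \<in> (\<Union>i\<in>Ks. ball (fst i) (snd i))" unfolding Ks_def by force
  qed
  have radius: "0 < snd i \<and> snd i \<le> max 1 (I / (t * unit_ball_vol (real DIM('a))))" if "i \<in> Ks" for i
  proof -
    obtain x r where i: "i = (x, r)" "0 < r" and mass: "ennreal t * emeasure lborel (ball x r) < J x r"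
      using \<open>i \<in> Ks\<close> unfolding Ks_def by (cases i) auto
    have "J x r \<le> ennreal I"
      unfolding J_def I[symmetric] by (intro nn_integral_mono) (auto simp: indicator_def)
    with mass have "ennreal t * emeasure lborel (ball x r) < ennreal I"
      by (rule order.strict_trans2)
    then show ?thesis
      using radius_le_if_emeasure_ball_less[OF t \<open>0 < r\<close>] i by simp
  qed
  obtain C where C: "countable C" "C \<subseteq> Ks"
     "pairwise (\<lambda>i j. disjnt (ball (fst i) (snd i)) (ball (fst j) (snd j))) C"
     "S \<subseteq> (\<Union>i\<in>C. ball (fst i) (5 * snd i))"
    using Vitali_covering_lemma_balls[OF cover] radius by blast
  have "ennreal t * emeasure lborel S \<le> ennreal t * emeasure lborel (\<Union>i\<in>C. ball (fst i) (5 * snd i))"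
    using C(4) by (intro mult_left_mono emeasure_mono) (auto intro!: borel_open open_UN)
  also have "\<dots> \<le> ennreal (5 ^ DIM('a)) * (\<integral>\<^sup>+ z. ennreal \<bar>f z\<bar> \<partial>lborel)"
  proof (rule emeasure_five_times_disjoint_balls_le[OF f C(1)])
    show "disjoint_family_on (\<lambda>i. ball (fst i) (snd i)) C"
      using C(3) unfolding disjoint_family_on_def pairwise_def disjnt_def by auto
  qed (use C(2) radius in \<open>auto simp: Ks_def J_def less_imp_le\<close>)
  finally show ?thesis unfolding S_def .
qed

lemma hl_maximal_truncation:
  fixes f :: "'a::euclidean_space \<Rightarrow> real"
  assumes f: "f \<in> borel_measurable lborel" and s: "0 \<le> s"
  shows "hl_maximal f x \<le> hl_maximal (\<lambda>z. if s < \<bar>f z\<bar> then f z else 0) x + ennreal s"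
  unfolding hl_maximal_def[of f]
proof (rule SUP_least)
  fix r :: real assume "r \<in> {r. r \<in> \<rat> \<and> 0 < r}"
  then have r: "r \<in> \<rat>" "0 < r" by auto
  define f1 where "f1 = (\<lambda>z. if s < \<bar>f z\<bar> then f z else 0)"
  define V where "V = unit_ball_vol (real DIM('a)) * r ^ DIM('a)"
  have V: "0 < V" unfolding V_def using r by simp
  have f1: "f1 \<in> borel_measurable lborel" unfolding f1_def using f by measurable
  have "(\<integral>\<^sup>+ z. ennreal \<bar>f z\<bar> * indicator (ball x r) z \<partial>lborel)
      \<le> (\<integral>\<^sup>+ z. ennreal \<bar>f1 z\<bar> * indicator (ball x r) z + ennreal s * indicator (ball x r) z \<partial>lborel)"
  proof (rule nn_integral_mono)
    fix z
    have "ennreal \<bar>f z\<bar> \<le> ennreal \<bar>f1 z\<bar> + ennreal s"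
      unfolding f1_def using s by (auto simp: ennreal_plus[symmetric] simp del: ennreal_plus intro!: ennreal_leI)
    then show "ennreal \<bar>f z\<bar> * indicator (ball x r) z
        \<le> ennreal \<bar>f1 z\<bar> * indicator (ball x r) z + ennreal s * indicator (ball x r) z"
      by (auto simp: indicator_def)
  qed
  also have "\<dots> = (\<integral>\<^sup>+ z. ennreal \<bar>f1 z\<bar> * indicator (ball x r) z \<partial>lborel) + ennreal s * ennreal V"
  proof -
    have "(\<integral>\<^sup>+ z. ennreal s * indicator (ball x r) z \<partial>lborel) = ennreal s * ennreal V"
      using r by (subst nn_integral_cmult_indicator) (auto simp: emeasure_ball V_def)
    then show ?thesis
      using f1 by (subst nn_integral_add) (auto intro!: borel_measurable_times_ennreal borel_measurable_indicator)
  qed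
  finally have "(\<integral>\<^sup>+ z. ennreal \<bar>f z\<bar> * indicator (ball x r) z \<partial>lborel) * ennreal (1 / V)
      \<le> ((\<integral>\<^sup>+ z. ennreal \<bar>f1 z\<bar> * indicator (ball x r) z \<partial>lborel) + ennreal s * ennreal V) * ennreal (1 / V)"
    by (rule mult_right_mono) simp
  also have "\<dots> = (\<integral>\<^sup>+ z. ennreal \<bar>f1 z\<bar> * indicator (ball x r) z \<partial>lborel) * ennreal (1 / V) + ennreal s"
    using V s by (simp add: distrib_right mult.assoc ennreal_mult'[symmetric])
  also have "\<dots> \<le> hl_maximal f1 x + ennreal s"
    using ball_average_le_hl_maximal[OF r, of f1 x] unfolding V_def by (intro add_right_mono) auto
  finally show "(\<integral>\<^sup>+ z. ennreal \<bar>f z\<bar> * indicator (ball x r) z \<partial>lborel) *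
      ennreal (1 / (unit_ball_vol (real DIM('a)) * r ^ DIM('a))) \<le> hl_maximal f1 x + ennreal s"
    unfolding V_def .
qed

lemma emeasure_hl_maximal_superlevel_le:
  fixes f :: "'a::euclidean_space \<Rightarrow> real"
  assumes f: "f \<in> borel_measurable lborel" and t: "0 < t"
  shows "emeasure lborel {x. ennreal t < hl_maximal f x}
     \<le> ennreal (2 * 5 ^ DIM('a) / t) * (\<integral>\<^sup>+ z. ennreal \<bar>f z\<bar> * indicator {z. t / 2 < \<bar>f z\<bar>} z \<partial>lborel)"
proof -
  define f1 where "f1 = (\<lambda>z. if t / 2 < \<bar>f z\<bar> then f z else 0)"
  have f1: "f1 \<in> borel_measurable lborel" unfolding f1_def using f by measurable
  have half: "ennreal (t / 2) + ennreal (t / 2) = ennreal t"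
    using t by (simp add: ennreal_plus[symmetric] del: ennreal_plus)
  have "{x. ennreal t < hl_maximal f x} \<subseteq> {x. ennreal (t / 2) < hl_maximal f1 x}"
  proof
    fix x assume "x \<in> {x. ennreal t < hl_maximal f x}"
    then have "ennreal t < hl_maximal f1 x + ennreal (t / 2)"
      using hl_maximal_truncation[OF f, of "t / 2" x] t unfolding f1_def by simp
    then show "x \<in> {x. ennreal (t / 2) < hl_maximal f1 x}"
      unfolding half[symmetric] by (metis add_right_mono mem_Collect_eq not_le)
  qed
  moreover have "{x. ennreal (t / 2) < hl_maximal f1 x} \<in> sets lborel"
    using borel_measurable_hl_maximal[OF f1] by measurable
  ultimately have "emeasure lborel {x. ennreal t < hl_maximal f x} \<le> emeasure lborel {x. ennreal (t / 2) < hl_maximal f1 x}"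
    by (rule emeasure_mono)
  also have "\<dots> = ennreal (2 / t) * (ennreal (t / 2) * emeasure lborel {x. ennreal (t / 2) < hl_maximal f1 x})"
    using t by (simp add: mult.assoc[symmetric] ennreal_mult'[symmetric])
  also have "\<dots> \<le> ennreal (2 / t) * (ennreal (5 ^ DIM('a)) * (\<integral>\<^sup>+ z. ennreal \<bar>f1 z\<bar> \<partial>lborel))"
    using hl_maximal_weak_type[OF f1, of "t / 2"] t by (intro mult_left_mono) auto
  also have "(\<integral>\<^sup>+ z. ennreal \<bar>f1 z\<bar> \<partial>lborel) = (\<integral>\<^sup>+ z. ennreal \<bar>f z\<bar> * indicator {z. t / 2 < \<bar>f z\<bar>} z \<partial>lborel)"
    unfolding f1_def by (intro nn_integral_cong) (simp add: indicator_def)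
  also have "ennreal (2 / t) * (ennreal (5 ^ DIM('a)) * (\<integral>\<^sup>+ z. ennreal \<bar>f z\<bar> * indicator {z. t / 2 < \<bar>f z\<bar>} z \<partial>lborel))
      = ennreal (2 * 5 ^ DIM('a) / t) * (\<integral>\<^sup>+ z. ennreal \<bar>f z\<bar> * indicator {z. t / 2 < \<bar>f z\<bar>} z \<partial>lborel)"
    using t by (simp add: mult.assoc[symmetric] ennreal_mult'[symmetric])
  finally show ?thesis .
qed

section \<open>The layer cake formula and the $L^p$ bound\<close>

lemma nn_integral_powr_greaterThanLessThan:
  fixes a c :: real
  assumes a: "-1 < a" and c: "0 \<le> c"
  shows "(\<integral>\<^sup>+ t. ennreal (t powr a) * indicator {0<..<c} t \<partial>lborel) = ennreal (c powr (a + 1) / (a + 1))"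
proof -
  have "((\<lambda>t. t powr a) has_integral (c powr (a + 1) / (a + 1))) {0..c}"
    by (rule has_integral_powr_from_0[OF a c])
  then have "((\<lambda>t. if t \<in> {0..c} then t powr a else 0) has_integral (c powr (a + 1) / (a + 1))) UNIV"
    by (simp only: has_integral_restrict_UNIV)
  then have "(\<integral>\<^sup>+ t. ennreal (if t \<in> {0..c} then t powr a else 0) \<partial>lborel) = ennreal (c powr (a + 1) / (a + 1))"
    by (rule nn_integral_has_integral_lborel[rotated 2]) auto
  moreover have "AE t in lborel. ennreal (t powr a) * indicator {0<..<c} t = ennreal (if t \<in> {0..c} then t powr a else 0)"
    using AE_lborel_singleton[of 0] AE_lborel_singleton[of c]
    by eventually_elim (auto simp: indicator_def)
  ultimately show ?thesis
    by (simp add: nn_integral_cong_AE)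
qed

definition enn_powr :: "ennreal \<Rightarrow> real \<Rightarrow> ennreal" where
  "enn_powr y p = (if y = \<infinity> then \<infinity> else ennreal (enn2real y powr p))"

lemma enn_powr_mono: "0 < p \<Longrightarrow> y1 \<le> y2 \<Longrightarrow> enn_powr y1 p \<le> enn_powr y2 p"
  unfolding enn_powr_def
  by (cases y1; cases y2) (auto intro!: ennreal_leI powr_mono2 simp: top_unique)

lemma enn_powr_cmult:
  assumes "0 < c" "0 < p"
  shows "enn_powr (ennreal c * y) p = ennreal (c powr p) * enn_powr y p"
  using assms
  by (cases y) (simp_all add: enn_powr_def ennreal_mult'[symmetric] powr_mult ennreal_mult_eq_top_iff)

lemma borel_measurable_enn_powr [measurable]:
  assumes "g \<in> borel_measurable M"
  shows "(\<lambda>x. enn_powr (g x) p) \<in> borel_measurable M"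
proof -
  have "(\<lambda>y::ennreal. if y = \<infinity> then \<infinity> else ennreal (enn2real y powr p)) \<in> borel_measurable borel"
    by (intro measurable_If) (auto intro: borel_closed)
  from measurable_compose[OF assms this] show ?thesis unfolding enn_powr_def .
qed

lemma enn_powr_layer_cake:
  assumes p: "0 < p"
  shows "enn_powr y p = (\<integral>\<^sup>+ t. ennreal (p * t powr (p - 1)) * indicator {t. 0 < t \<and> ennreal t < y} t \<partial>lborel)"
proof (cases y)
  case (real a)
  have "(\<integral>\<^sup>+ t. ennreal (p * t powr (p - 1)) * indicator {t. 0 < t \<and> ennreal t < y} t \<partial>lborel)
      = (\<integral>\<^sup>+ t. ennreal p * (ennreal (t powr (p - 1)) * indicator {0<..<a} t) \<partial>lborel)"
    using p real by (intro nn_integral_cong) (auto simp: indicator_def ennreal_less_iff ennreal_mult')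
  also have "\<dots> = enn_powr y p"
    using p real by (simp add: nn_integral_cmult nn_integral_powr_greaterThanLessThan enn_powr_def
        ennreal_mult'[symmetric])
  finally show ?thesis ..
next
  case top
  have "ennreal (M + 1) \<le> (\<integral>\<^sup>+ t. ennreal (p * t powr (p - 1)) * indicator {t. 0 < t \<and> ennreal t < y} t \<partial>lborel)"
    if "0 \<le> M" for M
  proof -
    define a where "a = (M + 1) powr (1 / p)"
    have "ennreal (M + 1) = (\<integral>\<^sup>+ t. ennreal p * (ennreal (t powr (p - 1)) * indicator {0<..<a} t) \<partial>lborel)"
      using p that by (simp add: nn_integral_cmult nn_integral_powr_greaterThanLessThan a_def powr_powr
          ennreal_mult'[symmetric])
    also have "\<dots> \<le> (\<integral>\<^sup>+ t. ennreal (p * t powr (p - 1)) * indicator {t. 0 < t \<and> ennreal t < y} t \<partial>lborel)"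
      using p top by (intro nn_integral_mono) (auto simp: indicator_def ennreal_mult')
    finally show ?thesis .
  qed
  then have "(\<integral>\<^sup>+ t. ennreal (p * t powr (p - 1)) * indicator {t. 0 < t \<and> ennreal t < y} t \<partial>lborel) = \<infinity>"
    by (metis enn2real_less enn2real_nonneg infinity_ennreal_def less_add_one linorder_not_less)
  then show ?thesis using top by (simp add: enn_powr_def)
qed

lemma nn_integral_enn_powr_layer_cake:
  fixes F :: "'a::euclidean_space \<Rightarrow> ennreal"
  assumes F: "F \<in> borel_measurable lborel" and p: "0 < p"
  shows "(\<integral>\<^sup>+ x. enn_powr (F x) p \<partial>lborel)
     = (\<integral>\<^sup>+ t. ennreal (p * t powr (p - 1)) * indicator {0<..} t * emeasure lborel {x. ennreal t < F x} \<partial>lborel)"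
proof -
  have "(\<lambda>(x, t). ennreal (p * t powr (p - 1)) * indicator {t. 0 < t \<and> ennreal t < F x} t)
      \<in> borel_measurable (lborel \<Otimes>\<^sub>M (lborel :: real measure))"
  proof (rule borel_measurable_lborel_pair)
    have "F \<in> borel_measurable borel" using F by simp
    then show "(\<lambda>(x, t). ennreal (p * t powr (p - 1)) * indicator {t. 0 < t \<and> ennreal t < F x} t)
        \<in> borel_measurable (borel \<Otimes>\<^sub>M borel)"
      unfolding indicator_def by measurable
  qed
  note Fubini = lborel_pair.Fubini'[OF this]
  have "(\<integral>\<^sup>+ x. enn_powr (F x) p \<partial>lborel)
      = (\<integral>\<^sup>+ x. (\<integral>\<^sup>+ t. ennreal (p * t powr (p - 1)) * indicator {t. 0 < t \<and> ennreal t < F x} t \<partial>lborel) \<partial>lborel)"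
    using p by (intro nn_integral_cong enn_powr_layer_cake)
  also have "\<dots> = (\<integral>\<^sup>+ t. (\<integral>\<^sup>+ x. ennreal (p * t powr (p - 1)) * indicator {t. 0 < t \<and> ennreal t < F x} t \<partial>lborel) \<partial>lborel)"
    using Fubini by simp
  also have "\<dots> = (\<integral>\<^sup>+ t. ennreal (p * t powr (p - 1)) * indicator {0<..} t * emeasure lborel {x. ennreal t < F x} \<partial>lborel)"
  proof (rule nn_integral_cong)
    fix t :: real
    have "{x. ennreal t < F x} \<in> sets lborel" using F by measurable
    then show "(\<integral>\<^sup>+ x. ennreal (p * t powr (p - 1)) * indicator {t. 0 < t \<and> ennreal t < F x} t \<partial>lborel)
        = ennreal (p * t powr (p - 1)) * indicator {0<..} t * emeasure lborel {x. ennreal t < F x}"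
      by (cases "0 < t") (simp_all add: indicator_def nn_integral_cmult_indicator[symmetric] of_bool_def)
  qed
  finally show ?thesis .
qed

lemma nn_integral_powr_up_to_twice:
  assumes p: "1 < p" and c: "0 \<le> c" and a: "0 \<le> a"
  shows "(\<integral>\<^sup>+ t. (if 0 < t \<and> t < 2 * a then ennreal (c * t powr (p - 2) * a) else 0) \<partial>lborel)
     = ennreal (c * 2 powr (p - 1) / (p - 1)) * ennreal (a powr p)"
proof -
  have "(\<integral>\<^sup>+ t. (if 0 < t \<and> t < 2 * a then ennreal (c * t powr (p - 2) * a) else 0) \<partial>lborel)
      = (\<integral>\<^sup>+ t. ennreal (c * a) * (ennreal (t powr (p - 2)) * indicator {0<..<2 * a} t) \<partial>lborel)"
    using c a by (intro nn_integral_cong) (auto simp: indicator_def ennreal_mult'[symmetric] mult_ac)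
  also have "\<dots> = ennreal (c * a * ((2 * a) powr (p - 1) / (p - 1)))"
    using p c a by (simp add: nn_integral_cmult nn_integral_powr_greaterThanLessThan ennreal_mult'[symmetric])
  also have "c * a * ((2 * a) powr (p - 1) / (p - 1)) = c * 2 powr (p - 1) / (p - 1) * a powr p"
  proof (cases "a = 0")
    case False
    then have "a * a powr (p - 1) = a powr p"
      using a by (simp add: powr_mult_base)
    then show ?thesis
      using a by (simp add: powr_mult mult_ac)
  qed (use p in simp)
  finally show ?thesis
    using p c ennreal_mult[of "c * 2 powr (p - 1) / (p - 1)" "a powr p"] by simp
qed

lemma nn_integral_truncation_powr:
  fixes f :: "'a::euclidean_space \<Rightarrow> real"
  assumes f: "f \<in> borel_measurable lborel" and p: "1 < p" and c: "0 \<le> c"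
  shows "(\<integral>\<^sup>+ t. ennreal (c * t powr (p - 2)) * indicator {0<..} t *
            (\<integral>\<^sup>+ x. ennreal \<bar>f x\<bar> * indicator {x. t / 2 < \<bar>f x\<bar>} x \<partial>lborel) \<partial>lborel)
     = ennreal (c * 2 powr (p - 1) / (p - 1)) * (\<integral>\<^sup>+ x. ennreal (\<bar>f x\<bar> powr p) \<partial>lborel)"
proof -
  define G where "G = (\<lambda>x t. if 0 < t \<and> t < 2 * \<bar>f x\<bar> then ennreal (c * t powr (p - 2) * \<bar>f x\<bar>) else 0)"
  have f': "f \<in> borel_measurable borel" using f by simp
  have "(\<lambda>(x, t). G x t) \<in> borel_measurable (borel \<Otimes>\<^sub>M (borel :: real measure))"
    unfolding G_def using f' by measurable
  note Fubini = lborel_pair.Fubini'[OF borel_measurable_lborel_pair[OF this]]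
  have slice: "ennreal (c * t powr (p - 2)) * indicator {0<..} t *
      (\<integral>\<^sup>+ x. ennreal \<bar>f x\<bar> * indicator {x. t / 2 < \<bar>f x\<bar>} x \<partial>lborel) = (\<integral>\<^sup>+ x. G x t \<partial>lborel)" for t
  proof -
    have "(\<lambda>x. ennreal \<bar>f x\<bar> * indicator {x. t / 2 < \<bar>f x\<bar>} x) \<in> borel_measurable lborel"
      using f unfolding indicator_def by measurable
    then have "ennreal (c * t powr (p - 2)) * indicator {0<..} t *
        (\<integral>\<^sup>+ x. ennreal \<bar>f x\<bar> * indicator {x. t / 2 < \<bar>f x\<bar>} x \<partial>lborel)
      = (\<integral>\<^sup>+ x. ennreal (c * t powr (p - 2)) * indicator {0<..} t *
          (ennreal \<bar>f x\<bar> * indicator {x. t / 2 < \<bar>f x\<bar>} x) \<partial>lborel)"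
      by (rule nn_integral_cmult[symmetric])
    also have "\<dots> = (\<integral>\<^sup>+ x. G x t \<partial>lborel)"
      using c by (intro nn_integral_cong) (auto simp: G_def indicator_def ennreal_mult')
    finally show ?thesis .
  qed
  have "(\<integral>\<^sup>+ t. ennreal (c * t powr (p - 2)) * indicator {0<..} t *
            (\<integral>\<^sup>+ x. ennreal \<bar>f x\<bar> * indicator {x. t / 2 < \<bar>f x\<bar>} x \<partial>lborel) \<partial>lborel)
      = (\<integral>\<^sup>+ x. (\<integral>\<^sup>+ t. G x t \<partial>lborel) \<partial>lborel)"
    unfolding slice using Fubini by simp
  also have "\<dots> = (\<integral>\<^sup>+ x. ennreal (c * 2 powr (p - 1) / (p - 1)) * ennreal (\<bar>f x\<bar> powr p) \<partial>lborel)"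
    unfolding G_def using p c by (intro nn_integral_cong nn_integral_powr_up_to_twice) auto
  also have "\<dots> = ennreal (c * 2 powr (p - 1) / (p - 1)) * (\<integral>\<^sup>+ x. ennreal (\<bar>f x\<bar> powr p) \<partial>lborel)"
    using f' by (intro nn_integral_cmult) measurable
  finally show ?thesis .
qed

lemma hl_maximal_Lp:
  fixes f :: "'a::euclidean_space \<Rightarrow> real"
  assumes f: "f \<in> borel_measurable lborel" and p: "1 < p"
  shows "(\<integral>\<^sup>+ x. enn_powr (hl_maximal f x) p \<partial>lborel)
     \<le> ennreal (2 powr p * 5 ^ DIM('a) * p / (p - 1)) * (\<integral>\<^sup>+ z. ennreal (\<bar>f z\<bar> powr p) \<partial>lborel)"
proof -
  define c where "c = 2 * 5 ^ DIM('a) * p"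
  have c: "0 \<le> c" unfolding c_def using p by simp
  have "(\<integral>\<^sup>+ x. enn_powr (hl_maximal f x) p \<partial>lborel)
      = (\<integral>\<^sup>+ t. ennreal (p * t powr (p - 1)) * indicator {0<..} t *
           emeasure lborel {x. ennreal t < hl_maximal f x} \<partial>lborel)"
    using p by (intro nn_integral_enn_powr_layer_cake borel_measurable_hl_maximal f) simp
  also have "\<dots> \<le> (\<integral>\<^sup>+ t. ennreal (c * t powr (p - 2)) * indicator {0<..} t *
            (\<integral>\<^sup>+ x. ennreal \<bar>f x\<bar> * indicator {x. t / 2 < \<bar>f x\<bar>} x \<partial>lborel) \<partial>lborel)"
  proof (rule nn_integral_mono)
    fix t :: real
    show "ennreal (p * t powr (p - 1)) * indicator {0<..} t * emeasure lborel {x. ennreal t < hl_maximal f x}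
        \<le> ennreal (c * t powr (p - 2)) * indicator {0<..} t *
            (\<integral>\<^sup>+ x. ennreal \<bar>f x\<bar> * indicator {x. t / 2 < \<bar>f x\<bar>} x \<partial>lborel)"
    proof (cases "0 < t")
      case True
      have "p * t powr (p - 1) * (2 * 5 ^ DIM('a) / t) = c * t powr (p - 2)"
        using True by (simp add: c_def powr_diff power2_eq_square mult_ac)
      then show ?thesis
        using True p mult_left_mono[OF emeasure_hl_maximal_superlevel_le[OF f True],
            of "ennreal (p * t powr (p - 1))"]
        by (simp add: mult.assoc[symmetric] ennreal_mult'[symmetric])
    qed simp
  qed
  also have "\<dots> = ennreal (c * 2 powr (p - 1) / (p - 1)) * (\<integral>\<^sup>+ x. ennreal (\<bar>f x\<bar> powr p) \<partial>lborel)"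
    by (rule nn_integral_truncation_powr[OF f p c])
  also have "c * 2 powr (p - 1) / (p - 1) = 2 powr p * 5 ^ DIM('a) * p / (p - 1)"
    by (simp add: c_def powr_diff)
  finally show ?thesis .
qed

section \<open>Harnack kernels are dominated by the maximal function\<close>

lemma ennreal_abs_integral_le_nn_integral:
  fixes g :: "'a \<Rightarrow> real"
  shows "ennreal \<bar>\<integral> z. g z \<partial>M\<bar> \<le> (\<integral>\<^sup>+ z. ennreal \<bar>g z\<bar> \<partial>M)"
  using integral_norm_bound_ennreal[of M g]
  by (cases "integrable M g") (simp_all add: not_integrable_integral_eq)

lemma kernel_le_harnack_average:
  fixes k :: "'a::euclidean_space \<Rightarrow> real"
  assumes k: "k \<in> borel_measurable borel" "\<And>w. 0 \<le> k w" and H: "0 \<le> H" and a: "0 \<le> a"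
    and \<rho>: "0 < \<rho>" and harnack: "\<And>w. w \<in> ball z \<rho> \<Longrightarrow> k z \<le> H * k w"
  shows "ennreal (k z * a) \<le> (\<integral>\<^sup>+ w. ennreal (H * k w) *
     (if dist z w < \<rho> then ennreal (a / (unit_ball_vol (real DIM('a)) * \<rho> ^ DIM('a))) else 0) \<partial>lborel)"
proof -
  define c where "c = a / (unit_ball_vol (real DIM('a)) * \<rho> ^ DIM('a))"
  have V: "unit_ball_vol (real DIM('a)) \<noteq> 0" by (simp add: less_imp_neq[symmetric])
  have c: "0 \<le> c" unfolding c_def using a \<rho> by simp
  have "ennreal (k z * a) = ennreal c * (\<integral>\<^sup>+ w. ennreal (k z) * indicator (ball z \<rho>) w \<partial>lborel)"
    using c \<rho> V k(2)[of z]
    by (simp add: c_def nn_integral_cmult_indicator emeasure_ball ennreal_mult'[symmetric] mult_ac)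
  also have "\<dots> \<le> ennreal c * (\<integral>\<^sup>+ w. ennreal H * (ennreal (k w) * indicator (ball z \<rho>) w) \<partial>lborel)"
    using harnack H k(2) by (intro mult_left_mono nn_integral_mono)
      (auto simp: indicator_def ennreal_mult'[symmetric] intro!: ennreal_leI)
  also have "\<dots> = (\<integral>\<^sup>+ w. ennreal c * (ennreal H * (ennreal (k w) * indicator (ball z \<rho>) w)) \<partial>lborel)"
    using k(1) by (intro nn_integral_cmult[symmetric]) (auto intro!: borel_measurable_times_ennreal borel_measurable_indicator)
  also have "\<dots> = (\<integral>\<^sup>+ w. ennreal (H * k w) * (if dist z w < \<rho> then ennreal c else 0) \<partial>lborel)"
    using H by (intro nn_integral_cong) (auto simp: indicator_def ennreal_mult' mult_ac)
  finally show ?thesis unfolding c_def .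
qed

lemma harnack_ball_bounds:
  fixes x z w :: "'a::metric_space"
  assumes \<gamma>: "0 < \<gamma>" "\<gamma> < 1" and V: "0 < V" and zw: "dist z w < \<gamma> * dist z x"
  shows "dist z x < dist w x / (1 - \<gamma>)"
    and "1 / (V * (\<gamma> * dist z x) ^ n) \<le> (1 + \<gamma>) ^ n / (V * \<gamma> ^ n * dist w x ^ n)"
proof -
  define d where "d = dist z x"
  define s where "s = dist w x"
  have "d \<le> dist z w + s" unfolding d_def s_def by (rule dist_triangle)
  with zw \<gamma> have ds: "d * (1 - \<gamma>) < s" by (simp add: d_def algebra_simps)
  with \<gamma> show "dist z x < dist w x / (1 - \<gamma>)" by (simp add: d_def s_def field_simps)
  have "0 < \<gamma> * d" unfolding d_def using zw zero_le_dist[of z w] by linarith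
  then have d: "0 < d" using \<gamma> by (simp add: zero_less_mult_iff)
  with ds \<gamma> have "0 < s" by (smt (verit) mult_pos_pos)
  have "s \<le> dist w z + d" unfolding d_def s_def by (rule dist_triangle)
  with zw have "s \<le> (1 + \<gamma>) * d" by (simp add: d_def dist_commute algebra_simps)
  then have "s ^ n \<le> (1 + \<gamma>) ^ n * d ^ n"
    using \<open>0 < s\<close> by (metis power_mono power_mult_distrib less_imp_le)
  then have "V * \<gamma> ^ n * s ^ n \<le> V * \<gamma> ^ n * ((1 + \<gamma>) ^ n * d ^ n)"
    using V \<gamma> by (intro mult_left_mono) auto
  moreover note \<open>0 < s\<close>
  ultimately show "1 / (V * (\<gamma> * dist z x) ^ n) \<le> (1 + \<gamma>) ^ n / (V * \<gamma> ^ n * dist w x ^ n)"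
    using V \<gamma> d unfolding d_def[symmetric] s_def[symmetric] by (simp add: field_simps power_mult_distrib)
qed

lemma harnack_weighted_integral_le_ball_integral:
  fixes f :: "'a::euclidean_space \<Rightarrow> real"
  assumes f: "f \<in> borel_measurable lborel" and \<gamma>: "0 < \<gamma>" "\<gamma> < 1" and R: "dist w x / (1 - \<gamma>) \<le> R"
  defines "V \<equiv> unit_ball_vol (real DIM('a))" and "n \<equiv> DIM('a)"
  shows "(\<integral>\<^sup>+ z. (if dist z w < \<gamma> * dist z x then ennreal (\<bar>f z\<bar> / (V * (\<gamma> * dist z x) ^ n)) else 0) \<partial>lborel)
     \<le> ennreal ((1 + \<gamma>) ^ n / (V * \<gamma> ^ n * dist w x ^ n)) *
       (\<integral>\<^sup>+ z. ennreal \<bar>f z\<bar> * indicator (ball x R) z \<partial>lborel)"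
proof -
  define c where "c = (1 + \<gamma>) ^ n / (V * \<gamma> ^ n * dist w x ^ n)"
  have V: "0 < V" unfolding V_def by simp
  have c: "0 \<le> c" unfolding c_def using V \<gamma> by simp
  have "(\<integral>\<^sup>+ z. (if dist z w < \<gamma> * dist z x then ennreal (\<bar>f z\<bar> / (V * (\<gamma> * dist z x) ^ n)) else 0) \<partial>lborel)
      \<le> (\<integral>\<^sup>+ z. ennreal c * (ennreal \<bar>f z\<bar> * indicator (ball x R) z) \<partial>lborel)"
  proof (intro nn_integral_mono)
    fix z
    show "(if dist z w < \<gamma> * dist z x then ennreal (\<bar>f z\<bar> / (V * (\<gamma> * dist z x) ^ n)) else 0)
        \<le> ennreal c * (ennreal \<bar>f z\<bar> * indicator (ball x R) z)"
    proof (cases "dist z w < \<gamma> * dist z x")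
      case True
      have "z \<in> ball x R"
        using harnack_ball_bounds(1)[OF \<gamma> V True] R by (simp add: dist_commute)
      have "1 / (V * (\<gamma> * dist z x) ^ n) \<le> c"
        using harnack_ball_bounds(2)[OF \<gamma> V True] unfolding c_def .
      then have "\<bar>f z\<bar> / (V * (\<gamma> * dist z x) ^ n) \<le> c * \<bar>f z\<bar>"
        using mult_right_mono[of _ c "\<bar>f z\<bar>"] by (metis abs_ge_zero times_divide_eq_left mult_1)
      then show ?thesis
        using True \<open>z \<in> ball x R\<close> c by (simp add: ennreal_mult'[symmetric] ennreal_leI)
    qed simp
  qed
  also have "\<dots> = ennreal c * (\<integral>\<^sup>+ z. ennreal \<bar>f z\<bar> * indicator (ball x R) z \<partial>lborel)"
    using f by (intro nn_integral_cmult) (auto intro!: borel_measurable_times_ennreal borel_measurable_indicator)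
  finally show ?thesis unfolding c_def .
qed

lemma harnack_weighted_integral_le_hl_maximal:
  fixes f :: "'a::euclidean_space \<Rightarrow> real"
  assumes f: "f \<in> borel_measurable lborel" and \<gamma>: "0 < \<gamma>" "\<gamma> < 1"
  defines "V \<equiv> unit_ball_vol (real DIM('a))" and "n \<equiv> DIM('a)"
  shows "(\<integral>\<^sup>+ z. (if dist z w < \<gamma> * dist z x then ennreal (\<bar>f z\<bar> / (V * (\<gamma> * dist z x) ^ n)) else 0) \<partial>lborel)
     \<le> ennreal ((2 * (1 + \<gamma>) / ((1 - \<gamma>) * \<gamma>)) ^ n) * hl_maximal f x"
proof (cases "w = x")
  case True
  have "\<not> dist z x < \<gamma> * dist z x" for z
    using \<gamma> mult_left_le_one_le[of "dist z x" \<gamma>] by (simp add: not_less)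
  then show ?thesis using True by simp
next
  case False
  define s where "s = dist w x"
  define c where "c = (1 + \<gamma>) ^ n / (V * \<gamma> ^ n * s ^ n)"
  have V: "0 < V" unfolding V_def by simp
  have s: "0 < s" unfolding s_def using False by simp
  have c: "0 \<le> c" unfolding c_def using V s \<gamma> by simp
  obtain R where R: "R \<in> \<rat>" "s / (1 - \<gamma>) < R" "R < 2 * s / (1 - \<gamma>)"
    using Rats_dense_in_real[of "s / (1 - \<gamma>)" "2 * s / (1 - \<gamma>)"] s \<gamma>
    by (auto simp: divide_strict_right_mono)
  have R0: "0 < R" using R(2) s \<gamma> by (smt (verit) divide_pos_pos)
  have "(\<integral>\<^sup>+ z. (if dist z w < \<gamma> * dist z x then ennreal (\<bar>f z\<bar> / (V * (\<gamma> * dist z x) ^ n)) else 0) \<partial>lborel)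
      \<le> ennreal c * (\<integral>\<^sup>+ z. ennreal \<bar>f z\<bar> * indicator (ball x R) z \<partial>lborel)"
    unfolding c_def s_def V_def n_def using R(2) s_def
    by (intro harnack_weighted_integral_le_ball_integral[OF f \<gamma>]) simp
  also have "\<dots> \<le> ennreal c * (hl_maximal f x * ennreal (V * R ^ n))"
    using ball_integral_le_hl_maximal[OF R(1) R0] unfolding V_def n_def by (intro mult_left_mono) auto
  also have "\<dots> \<le> ennreal c * (hl_maximal f x * ennreal (V * (2 * s / (1 - \<gamma>)) ^ n))"
    using R R0 V by (intro mult_left_mono ennreal_leI power_mono) auto
  also have "\<dots> = ennreal ((2 * (1 + \<gamma>) / ((1 - \<gamma>) * \<gamma>)) ^ n) * hl_maximal f x"
  proof -
    have e: "(2 * s / (1 - \<gamma>)) ^ n = 2 ^ n * s ^ n / (1 - \<gamma>) ^ n"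
      "(2 * (1 + \<gamma>) / ((1 - \<gamma>) * \<gamma>)) ^ n = 2 ^ n * (1 + \<gamma>) ^ n / ((1 - \<gamma>) ^ n * \<gamma> ^ n)"
      by (simp_all only: power_divide power_mult_distrib)
    have "0 < s ^ n" "0 < \<gamma> ^ n" "0 < (1 - \<gamma>) ^ n" using s \<gamma> by auto
    then have "c * (V * (2 * s / (1 - \<gamma>)) ^ n) = (2 * (1 + \<gamma>) / ((1 - \<gamma>) * \<gamma>)) ^ n"
      unfolding c_def e using V s by (simp add: field_simps)
    moreover have "ennreal c * (hl_maximal f x * ennreal (V * (2 * s / (1 - \<gamma>)) ^ n))
        = ennreal (c * (V * (2 * s / (1 - \<gamma>)) ^ n)) * hl_maximal f x"
      using c V by (simp add: ennreal_mult' mult_ac)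
    ultimately show ?thesis by simp
  qed
  finally show ?thesis .
qed

lemma kernel_integral_le_hl_maximal:
  fixes k f :: "'a::euclidean_space \<Rightarrow> real"
  assumes k: "k \<in> borel_measurable borel" "\<And>z. 0 \<le> k z" "(\<integral>\<^sup>+ z. ennreal (k z) \<partial>lborel) = 1"
    and harnack: "\<And>z w. z \<noteq> x \<Longrightarrow> w \<in> ball z (\<gamma> * dist x z) \<Longrightarrow> k z \<le> H * k w"
    and H: "0 \<le> H" and \<gamma>: "0 < \<gamma>" "\<gamma> < 1"
    and f: "f \<in> borel_measurable lborel"
  shows "ennreal \<bar>\<integral> z. k z * f z \<partial>lborel\<bar>
           \<le> ennreal (H * (2 * (1 + \<gamma>) / ((1 - \<gamma>) * \<gamma>)) ^ DIM('a)) * hl_maximal f x"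
proof -
  define V where "V = unit_ball_vol (real DIM('a))"
  define D where "D = (2 * (1 + \<gamma>) / ((1 - \<gamma>) * \<gamma>)) ^ DIM('a)"
  define W where "W = (\<lambda>z w. if dist z w < \<gamma> * dist z x
     then ennreal (\<bar>f z\<bar> / (V * (\<gamma> * dist z x) ^ DIM('a))) else 0)"
  have f': "f \<in> borel_measurable borel" using f by simp
  have "(\<lambda>(z, w). ennreal (H * k w) * W z w) \<in> borel_measurable (borel \<Otimes>\<^sub>M borel)"
    unfolding W_def using f' k(1) by measurable
  note Fubini = lborel_pair.Fubini'[OF borel_measurable_lborel_pair[OF this]]
  have "ennreal \<bar>\<integral> z. k z * f z \<partial>lborel\<bar> \<le> (\<integral>\<^sup>+ z. ennreal \<bar>k z * f z\<bar> \<partial>lborel)"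
    by (rule ennreal_abs_integral_le_nn_integral)
  also have "\<dots> = (\<integral>\<^sup>+ z. ennreal (k z * \<bar>f z\<bar>) * indicator (- {x}) z \<partial>lborel)"
    using AE_lborel_singleton[of x] by (intro nn_integral_cong_AE) (auto simp: abs_mult k(2))
  also have "\<dots> \<le> (\<integral>\<^sup>+ z. (\<integral>\<^sup>+ w. ennreal (H * k w) * W z w \<partial>lborel) \<partial>lborel)"
  proof (intro nn_integral_mono)
    fix z :: 'a
    show "ennreal (k z * \<bar>f z\<bar>) * indicator (- {x}) z \<le> (\<integral>\<^sup>+ w. ennreal (H * k w) * W z w \<partial>lborel)"
    proof (cases "z = x")
      case False
      have "ennreal (k z * \<bar>f z\<bar>) \<le> (\<integral>\<^sup>+ w. ennreal (H * k w) * W z w \<partial>lborel)"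
        unfolding W_def V_def using False \<gamma> harnack[OF False]
        by (intro kernel_le_harnack_average k H) (auto simp: dist_commute)
      then show ?thesis using False by simp
    qed simp
  qed
  also have "\<dots> = (\<integral>\<^sup>+ w. ennreal (H * k w) * (\<integral>\<^sup>+ z. W z w \<partial>lborel) \<partial>lborel)"
    using Fubini f' by (simp add: nn_integral_cmult W_def)
  also have "\<dots> \<le> (\<integral>\<^sup>+ w. ennreal (H * k w) * (ennreal D * hl_maximal f x) \<partial>lborel)"
  proof (intro nn_integral_mono mult_left_mono)
    show "(\<integral>\<^sup>+ z. W z w \<partial>lborel) \<le> ennreal D * hl_maximal f x" for w
      unfolding W_def V_def D_def by (rule harnack_weighted_integral_le_hl_maximal[OF f \<gamma>])
  qed simp
  also have "\<dots> = (\<integral>\<^sup>+ w. ennreal (k w) * (ennreal H * (ennreal D * hl_maximal f x)) \<partial>lborel)"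
    using H by (simp add: ennreal_mult' mult_ac)
  also have "\<dots> = ennreal H * (ennreal D * hl_maximal f x)"
    using k(1,3) by (simp add: nn_integral_multc)
  also have "\<dots> = ennreal (H * D) * hl_maximal f x"
    using H by (simp add: ennreal_mult' mult.assoc)
  finally show ?thesis unfolding D_def .
qed

section \<open>The maximal operator of a family of Markov kernels\<close>

lemma sym_markov_kernelD:
  assumes "sym_markov_kernel K"
  shows "K x \<in> borel_measurable borel" "\<And>z. 0 \<le> K x z" "(\<integral>\<^sup>+ z. ennreal (K x z) \<partial>lborel) = 1"
proof -
  have "(\<lambda>(x, z). K x z) \<in> borel_measurable borel"
    using assms unfolding sym_markov_kernel_def by blast
  then have "(\<lambda>z. (\<lambda>(x, z). K x z) (x, z)) \<in> borel_measurable borel"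
    by (rule measurable_compose[rotated]) (intro borel_measurable_continuous_onI continuous_intros)
  then show "K x \<in> borel_measurable borel" by simp
qed (use assms in \<open>auto simp: sym_markov_kernel_def\<close>)

lemma kernel_H_mono:
  assumes "kernel_H \<gamma> H K" "H \<le> H'" "\<And>x z. 0 \<le> K x z"
  shows "kernel_H \<gamma> H' K"
  using assms unfolding kernel_H_def by (meson mult_right_mono order_trans)

lemma max_op_le_hl_maximal:
  fixes K :: "real \<Rightarrow> real \<Rightarrow> 'a::euclidean_space \<Rightarrow> 'a \<Rightarrow> real"
  assumes \<gamma>: "0 < \<gamma>" "\<gamma> < 1" and H: "0 \<le> H"
    and K: "\<And>\<sigma> \<alpha>. 0 < \<sigma> \<Longrightarrow> \<sigma> \<le> \<sigma>0 \<Longrightarrow> 0 < \<alpha> \<Longrightarrow> \<alpha> < 1 \<Longrightarrow>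
      sym_markov_kernel (K \<sigma> \<alpha>) \<and> kernel_H \<gamma> H (K \<sigma> \<alpha>)"
    and f: "f \<in> borel_measurable lborel"
  shows "max_op \<sigma>0 K f x \<le> ennreal (H * (2 * (1 + \<gamma>) / ((1 - \<gamma>) * \<gamma>)) ^ DIM('a)) * hl_maximal f x"
  unfolding max_op_def
proof (rule SUP_least, clarify)
  fix \<alpha> \<sigma> :: real
  assume "\<alpha> \<in> {0<..<1}" "\<sigma> \<in> {0<..\<sigma>0}"
  then have markov: "sym_markov_kernel (K \<sigma> \<alpha>)" and harnack: "kernel_H \<gamma> H (K \<sigma> \<alpha>)"
    using K by auto
  show "ennreal \<bar>\<integral> z. K \<sigma> \<alpha> x z * f z \<partial>lborel\<bar>
      \<le> ennreal (H * (2 * (1 + \<gamma>) / ((1 - \<gamma>) * \<gamma>)) ^ DIM('a)) * hl_maximal f x"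
  proof (rule kernel_integral_le_hl_maximal[OF sym_markov_kernelD[OF markov] _ H \<gamma> f])
    fix z w assume "z \<noteq> x" "w \<in> ball z (\<gamma> * dist x z)"
    moreover have "z \<in> ball z (\<gamma> * dist x z)" using \<open>z \<noteq> x\<close> \<gamma> by simp
    ultimately show "K \<sigma> \<alpha> x z \<le> H * K \<sigma> \<alpha> x w"
      using harnack unfolding kernel_H_def by blast
  qed
qed

lemma weak_type_11_if_le_hl_maximal:
  fixes T :: "('a::euclidean_space \<Rightarrow> real) \<Rightarrow> 'a \<Rightarrow> ennreal"
  assumes D: "0 < D" and dom: "\<And>f x. f \<in> borel_measurable lborel \<Longrightarrow> T f x \<le> ennreal D * hl_maximal f x"
  shows "weak_type_11 T"
  unfolding weak_type_11_def
proof (intro exI[of _ "D * 5 ^ DIM('a)"] conjI allI impI)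
  fix f :: "'a \<Rightarrow> real" and t :: real
  assume "integrable lborel f" and t: "0 < t"
  then have f: "f \<in> borel_measurable lborel" by auto
  define S where "S = {x. ennreal (t / D) < hl_maximal f x}"
  have "{x. ennreal t < T f x} \<subseteq> S"
  proof
    fix x assume "x \<in> {x. ennreal t < T f x}"
    then have "ennreal D * ennreal (t / D) < ennreal D * hl_maximal f x"
      using dom[OF f, of x] D by (simp add: ennreal_mult'[symmetric])
    moreover have "ennreal D * hl_maximal f x \<le> ennreal D * ennreal (t / D)" if "x \<notin> S"
      using that unfolding S_def by (intro mult_left_mono) auto
    ultimately show "x \<in> S" by (meson leD)
  qed
  moreover have "S \<in> sets lborel" unfolding S_def using borel_measurable_hl_maximal[OF f] by measurable
  ultimately have "outer_leb {x. ennreal t < T f x} \<le> emeasure lborel S"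
    unfolding outer_leb_def by (intro INF_lower) auto
  then have "ennreal t * outer_leb {x. ennreal t < T f x} \<le> ennreal D * (ennreal (t / D) * emeasure lborel S)"
    using D t by (simp add: mult.assoc[symmetric] ennreal_mult'[symmetric] mult_left_mono)
  also have "\<dots> \<le> ennreal D * (ennreal (5 ^ DIM('a)) * (\<integral>\<^sup>+ z. ennreal \<bar>f z\<bar> \<partial>lborel))"
    using hl_maximal_weak_type[OF f, of "t / D"] D t unfolding S_def by (intro mult_left_mono) auto
  finally show "ennreal t * outer_leb {x. ennreal t < T f x} \<le> ennreal (D * 5 ^ DIM('a)) * (\<integral>\<^sup>+ z. ennreal \<bar>f z\<bar> \<partial>lborel)"
    using D by (simp add: mult.assoc ennreal_mult')
qed (use D in simp)

lemma bounded_Lp_if_le_hl_maximal: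
  fixes T :: "('a::euclidean_space \<Rightarrow> real) \<Rightarrow> 'a \<Rightarrow> ennreal"
  assumes D: "0 < D" and dom: "\<And>f x. f \<in> borel_measurable lborel \<Longrightarrow> T f x \<le> ennreal D * hl_maximal f x"
    and p: "1 < p"
  shows "bounded_Lp p T"
proof -
  define A where "A = 2 powr p * 5 ^ DIM('a) * p / (p - 1)"
  have A: "0 < A" unfolding A_def using p by simp
  define C where "C = D * A powr (1 / p)"
  have C: "C powr p = D powr p * A"
    unfolding C_def using D A p by (simp add: powr_mult powr_powr)
  have "upper_nn_integral (\<lambda>x. enn_powr (T f x) p) \<le> ennreal (C powr p) * (\<integral>\<^sup>+ z. ennreal (\<bar>f z\<bar> powr p) \<partial>lborel)"
    if f: "f \<in> borel_measurable lborel" for f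
  proof -
    have "upper_nn_integral (\<lambda>x. enn_powr (T f x) p) \<le> (\<integral>\<^sup>+ x. enn_powr (ennreal D * hl_maximal f x) p \<partial>lborel)"
      unfolding upper_nn_integral_def using dom[OF f] p borel_measurable_hl_maximal[OF f]
      by (intro INF_lower) (auto intro!: enn_powr_mono)
    also have "\<dots> = ennreal (D powr p) * (\<integral>\<^sup>+ x. enn_powr (hl_maximal f x) p \<partial>lborel)"
      using D p borel_measurable_hl_maximal[OF f] by (simp add: enn_powr_cmult nn_integral_cmult)
    also have "\<dots> \<le> ennreal (D powr p) * (ennreal A * (\<integral>\<^sup>+ z. ennreal (\<bar>f z\<bar> powr p) \<partial>lborel))"
      using hl_maximal_Lp[OF f p] unfolding A_def by (intro mult_left_mono) auto
    finally show ?thesis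
      unfolding C using A by (simp add: mult.assoc ennreal_mult')
  qed
  moreover have "0 \<le> C" unfolding C_def using D by simp
  ultimately show ?thesis
    unfolding bounded_Lp_def enn_powr_def by blast
qed

lemma ennreal_abs_kernel_integral_le:
  fixes k f :: "'a::euclidean_space \<Rightarrow> real"
  assumes k: "k \<in> borel_measurable borel" "\<And>z. 0 \<le> k z" "(\<integral>\<^sup>+ z. ennreal (k z) \<partial>lborel) = 1"
    and M: "AE z in lborel. \<bar>f z\<bar> \<le> M"
  shows "ennreal \<bar>\<integral> z. k z * f z \<partial>lborel\<bar> \<le> ennreal M"
proof -
  have "ennreal \<bar>\<integral> z. k z * f z \<partial>lborel\<bar> \<le> (\<integral>\<^sup>+ z. ennreal \<bar>k z * f z\<bar> \<partial>lborel)"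
    by (rule ennreal_abs_integral_le_nn_integral)
  also have "\<dots> \<le> (\<integral>\<^sup>+ z. ennreal (k z) * ennreal M \<partial>lborel)"
    using M by (intro nn_integral_mono_AE) (auto simp: abs_mult k(2) ennreal_mult'[symmetric] intro!: ennreal_leI mult_left_mono elim!: eventually_mono)
  also have "\<dots> = ennreal M"
    using k(1,3) by (simp add: nn_integral_multc)
  finally show ?thesis .
qed

lemma bounded_Linf_max_op:
  assumes "\<And>\<sigma> \<alpha>. 0 < \<sigma> \<Longrightarrow> \<sigma> \<le> \<sigma>0 \<Longrightarrow> 0 < \<alpha> \<Longrightarrow> \<alpha> < 1 \<Longrightarrow> sym_markov_kernel (K \<sigma> \<alpha>)"
  shows "bounded_Linf (max_op \<sigma>0 K)"
  unfolding bounded_Linf_def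
proof (intro exI[of _ 1] conjI allI impI)
  fix f :: "'a \<Rightarrow> real" and M :: real
  assume "AE z in lborel. \<bar>f z\<bar> \<le> M"
  then have "max_op \<sigma>0 K f x \<le> ennreal (1 * M)" for x
    unfolding max_op_def using assms
    by (intro SUP_least) (auto intro: ennreal_abs_kernel_integral_le[OF sym_markov_kernelD])
  then show "AE x in lborel. max_op \<sigma>0 K f x \<le> ennreal (1 * M)" by simp
qed simp

theorem corollary3p4:
  fixes K :: "real \<Rightarrow> real \<Rightarrow> 'a::euclidean_space \<Rightarrow> 'a \<Rightarrow> real"
    and \<sigma>0 \<gamma> :: real
  assumes "0 < \<sigma>0" and "0 < \<gamma>" and "\<gamma> < 1"
    and "\<And>\<sigma> \<alpha>. 0 < \<sigma> \<Longrightarrow> \<sigma> \<le> \<sigma>0 \<Longrightarrow> 0 < \<alpha> \<Longrightarrow> \<alpha> < 1 \<Longrightarrow>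
           sym_markov_kernel (K \<sigma> \<alpha>) \<and> kernel_S \<sigma> \<alpha> (K \<sigma> \<alpha>) \<and>
           kernel_H \<gamma> (((1 + \<gamma>) / (1 - \<gamma>)) powr (real DIM('a) + \<sigma>)) (K \<sigma> \<alpha>)"
  shows "weak_type_11 (max_op \<sigma>0 K)
     \<and> (\<forall>p. 1 < p \<longrightarrow> bounded_Lp p (max_op \<sigma>0 K))
     \<and> bounded_Linf (max_op \<sigma>0 K)"
proof -
  note \<gamma> = assms(2,3) and kernels = assms(4)
  define H where "H = ((1 + \<gamma>) / (1 - \<gamma>)) powr (real DIM('a) + \<sigma>0)"
  define D where "D = H * (2 * (1 + \<gamma>) / ((1 - \<gamma>) * \<gamma>)) ^ DIM('a)"
  have base: "1 \<le> (1 + \<gamma>) / (1 - \<gamma>)" using \<gamma> by (simp add: field_simps)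
  have H: "0 < H" unfolding H_def using base by (intro powr_gt_zero[THEN iffD2]) linarith
  have D: "0 < D" unfolding D_def using H \<gamma> by simp
  have markov: "sym_markov_kernel (K \<sigma> \<alpha>)" if "0 < \<sigma>" "\<sigma> \<le> \<sigma>0" "0 < \<alpha>" "\<alpha> < 1" for \<sigma> \<alpha>
    using kernels[OF that] by blast
  have harnack: "kernel_H \<gamma> H (K \<sigma> \<alpha>)" if "0 < \<sigma>" "\<sigma> \<le> \<sigma>0" "0 < \<alpha>" "\<alpha> < 1" for \<sigma> \<alpha>
  proof (rule kernel_H_mono)
    show "kernel_H \<gamma> (((1 + \<gamma>) / (1 - \<gamma>)) powr (real DIM('a) + \<sigma>)) (K \<sigma> \<alpha>)"
      using kernels[OF that] by blast
    show "((1 + \<gamma>) / (1 - \<gamma>)) powr (real DIM('a) + \<sigma>) \<le> H"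
      unfolding H_def using base that by (intro powr_mono) auto
  qed (use sym_markov_kernelD[OF markov[OF that]] in auto)
  have dom: "max_op \<sigma>0 K f x \<le> ennreal D * hl_maximal f x" if "f \<in> borel_measurable lborel" for f x
    unfolding D_def using \<gamma> H markov harnack that by (intro max_op_le_hl_maximal) auto
  have "weak_type_11 (max_op \<sigma>0 K)"
    using D dom by (rule weak_type_11_if_le_hl_maximal)
  moreover have "bounded_Lp p (max_op \<sigma>0 K)" if "1 < p" for p
    using D dom that by (rule bounded_Lp_if_le_hl_maximal)
  moreover have "bounded_Linf (max_op \<sigma>0 K)"
    using markov by (rule bounded_Linf_max_op)
  ultimately show ?thesis by blast
qed

end
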